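(* For every composition $\alpha$, the number of maximal chains from the empty composition $\varnothing$ to $\alpha$ in the poset $\mathcal{R}_c$ (that is, the number of sequences $\varnothing=\alpha^{(0)}\lessdot_r\alpha^{(1)}\lessdot_r\cdots\lessdot_r\alpha^{(n)}=\alpha$) equals the number of standard reverse composition tableaux of shape $\alpha$.
   Context: Compositions have positive parts; $\varnothing$ is the empty composition. Operators: for $i\geq1$, $\mathfrak{d}_i(\alpha)$ subtracts $1$ from the rightmost part of $\alpha$ equal to $i$ (deleting a resulting $0$), and is $0$ if there is no such part; operators send $0$ to $0$. $\mathfrak{v}_{[i-1]}=\mathfrak{d}_1\cdots\mathfrak{d}_{i-1}$ ($\mathfrak{d}_{i-1}$ applied first; $\mathfrak{v}_{[0]}=\mathrm{id}$), $a_i$ appends a part $i$ at the end, $u_i=a_i\mathfrak{v}_{[i-1]}$. The poset $\mathcal{R}_c$ on compositions has cover relation $\alpha\lessdot_r\beta$ iff $\beta=u_i(\alpha)$ for some $i\geq1$, and its order is the transitive closure. An SRCT of shape $\alpha\vDash m$ (reverse composition diagram: row $r$ from the top has $\alpha_r$ left-justified boxes) is a bijective filling $\tau$ by $\{1,\ldots,m\}$ with rows decreasing left to right, first column increasing top to bottom, and such that for rows $r<s$ and column $c$ with $(s,c+1)$ a box, if $\tau(r,c)>\tau(s,c+1)$ then $(r,c+1)$ is a box and $\tau(r,c+1)>\tau(s,c+1)$. *)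

theory Defs
  imports Main
begin

definition is_composition :: "nat list \<Rightarrow> bool" where
  "is_composition \<alpha> \<longleftrightarrow> (\<forall>p\<in>set \<alpha>. 0 < p)"

text \<open>Operators act on nat list option; None plays the role of the zero element 0.\<close>

definition rightmost_idx :: "nat \<Rightarrow> nat list \<Rightarrow> nat option" where
  "rightmost_idx i \<alpha> =
     (if i \<in> set \<alpha> then Some (last (filter (\<lambda>j. \<alpha> ! j = i) [0..<length \<alpha>])) else None)"

definition dop :: "nat \<Rightarrow> nat list option \<Rightarrow> nat list option" where
  "dop i x = (case x of None \<Rightarrow> None
     | Some \<alpha> \<Rightarrow> (case rightmost_idx i \<alpha> of None \<Rightarrow> None
        | Some j \<Rightarrow> Some (if \<alpha> ! j = 1 then take j \<alpha> @ drop (Suc j) \<alpha>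
                          else \<alpha>[j := \<alpha> ! j - 1])))"

text \<open>vop k = d_1 d_2 ... d_k (d_k applied first); vop 0 = id. So v_[i-1] = vop (i-1).\<close>
fun vop :: "nat \<Rightarrow> nat list option \<Rightarrow> nat list option" where
  "vop 0 = id"
| "vop (Suc k) = vop k \<circ> dop (Suc k)"

definition aop :: "nat \<Rightarrow> nat list option \<Rightarrow> nat list option" where
  "aop i = map_option (\<lambda>\<alpha>. \<alpha> @ [i])"

definition uop :: "nat \<Rightarrow> nat list option \<Rightarrow> nat list option" where
  "uop i = aop i \<circ> vop (i - 1)"

definition covers_r :: "nat list \<Rightarrow> nat list \<Rightarrow> bool" where
  "covers_r \<alpha> \<beta> \<longleftrightarrow> (\<exists>i\<ge>1. uop i (Some \<alpha>) = Some \<beta>)"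

definition chains_to :: "nat list \<Rightarrow> nat list list set" where
  "chains_to \<alpha> = {cs. cs \<noteq> [] \<and> hd cs = [] \<and> last cs = \<alpha> \<and>
       (\<forall>k. Suc k < length cs \<longrightarrow> covers_r (cs ! k) (cs ! Suc k))}"

text \<open>Cells of the reverse composition diagram, 0-indexed: (row, column).\<close>
definition cells :: "nat list \<Rightarrow> (nat \<times> nat) set" where
  "cells \<alpha> = {(r, c). r < length \<alpha> \<and> c < \<alpha> ! r}"

definition is_SRCT :: "nat list \<Rightarrow> (nat \<times> nat \<Rightarrow> nat) \<Rightarrow> bool" where
  "is_SRCT \<alpha> \<tau> \<longleftrightarrow>
     bij_betw \<tau> (cells \<alpha>) {1..sum_list \<alpha>} \<and>
     (\<forall>r c c'. (r, c') \<in> cells \<alpha> \<and> c < c' \<longrightarrow> \<tau> (r, c) > \<tau> (r, c')) \<and>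
     (\<forall>r s. r < s \<and> s < length \<alpha> \<longrightarrow> \<tau> (r, 0) < \<tau> (s, 0)) \<and>
     (\<forall>r s c. r < s \<and> (s, Suc c) \<in> cells \<alpha> \<and> (r, c) \<in> cells \<alpha> \<and> \<tau> (r, c) > \<tau> (s, Suc c)
        \<longrightarrow> (r, Suc c) \<in> cells \<alpha> \<and> \<tau> (r, Suc c) > \<tau> (s, Suc c))"

text \<open>SRCTs as functions that vanish outside the diagram (so each tableau is counted once).\<close>
definition SRCTs :: "nat list \<Rightarrow> (nat \<times> nat \<Rightarrow> nat) set" where
  "SRCTs \<alpha> = {\<tau>. is_SRCT \<alpha> \<tau> \<and> (\<forall>x. x \<notin> cells \<alpha> \<longrightarrow> \<tau> x = 0)}"

end

theory Submission
  imports Defs "HOL-Library.Multiset"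
begin

text \<open>Besides \<open>R\<^sub>c\<close> consider the composition poset \<open>L\<^sub>c\<close>, in which the covers of
  \<open>\<beta>\<close> are \<open>1\<beta>\<close> and the compositions obtained by incrementing the leftmost occurrence of
  some part of \<open>\<beta>\<close>. The key fact is that the two up operators commute,
  \<open>U\<^sub>R U\<^sub>L = U\<^sub>L U\<^sub>R\<close>, which follows from tracking how each deletion operator
  \<open>d\<^sub>k\<close> interacts with \<open>U\<^sub>L\<close>. The number \<open>e(\<alpha>)\<close> of saturated \<open>R\<^sub>c\<close>-chains
  from \<open>\<emptyset>\<close> to \<open>\<alpha>\<close> is the sum of \<open>e(\<beta>)\<close> over the lower \<open>R\<^sub>c\<close>-covers \<open>\<beta>\<close> of
  \<open>\<alpha>\<close>; by induction on \<open>|\<alpha>|\<close> the commutation relation shows that it is equally the sum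
  over the lower \<open>L\<^sub>c\<close>-covers. The number of SRCTs of shape \<open>\<alpha>\<close> satisfies the same
  \<open>L\<^sub>c\<close>-recursion: the entry \<open>1\<close> is the last cell of a row whose removal undoes an
  \<open>L\<^sub>c\<close>-cover, and deleting it and decrementing the other entries is a bijection onto the
  SRCTs of the smaller shape.\<close>

section \<open>The deletion operators on lists\<close>

lemma rightmost_idx_snoc:
  "rightmost_idx k (g @ [x]) = (if x = k then Some (length g) else rightmost_idx k g)"
proof -
  have "filter (\<lambda>j. (g @ [x]) ! j = k) [0..<length g] = filter (\<lambda>j. g ! j = k) [0..<length g]"
    by (rule filter_cong) (auto simp: nth_append)
  then show ?thesis
    by (auto simp: rightmost_idx_def nth_append in_set_conv_nth)
qed

lemma rightmost_idx_SomeD: "rightmost_idx k g = Some j \<Longrightarrow> j < length g \<and> g ! j = k"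
proof -
  assume j: "rightmost_idx k g = Some j"
  then have k: "k \<in> set g" by (auto simp: rightmost_idx_def split: if_splits)
  then have ne: "filter (\<lambda>j. g ! j = k) [0..<length g] \<noteq> []"
    by (auto simp: filter_empty_conv in_set_conv_nth)
  have "j = last (filter (\<lambda>j. g ! j = k) [0..<length g])"
    using j k by (auto simp: rightmost_idx_def)
  then have "j \<in> set (filter (\<lambda>j. g ! j = k) [0..<length g])"
    using last_in_set[OF ne] by simp
  then show ?thesis by simp
qed

lemma dop_None [simp]: "dop k None = None"
  by (simp add: dop_def)

lemma dop_Some_Nil: "dop k (Some []) = None"
  by (simp add: dop_def rightmost_idx_def)

lemma dop_Some_snoc:
  "dop k (Some (g @ [x])) =
     (if x = k then Some (if k = 1 then g else g @ [k - 1])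
      else map_option (\<lambda>y. y @ [x]) (dop k (Some g)))"
proof (cases "x = k")
  case True
  then show ?thesis by (simp add: dop_def rightmost_idx_snoc)
next
  case False
  show ?thesis
  proof (cases "rightmost_idx k g")
    case None
    then show ?thesis using False by (simp add: dop_def rightmost_idx_snoc)
  next
    case (Some j)
    with rightmost_idx_SomeD have "j < length g" "g ! j = k" by auto
    then show ?thesis using False Some
      by (auto simp: dop_def rightmost_idx_snoc nth_append list_update_append)
  qed
qed

lemma dop_Some_eq_None_iff: "dop k (Some b) = None \<longleftrightarrow> k \<notin> set b"
  by (induction b rule: rev_induct) (auto simp: dop_Some_Nil dop_Some_snoc)

lemma dop_SomeD:
  assumes "dop k (Some b) = Some g" "1 \<le> k"
  shows "k \<in> set b" "2 \<le> k \<Longrightarrow> k - 1 \<in> set g"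
    "\<And>v. v \<in> set b \<Longrightarrow> v \<noteq> k \<Longrightarrow> v \<in> set g"
    "\<And>v. v \<in> set g \<Longrightarrow> v \<noteq> k - 1 \<Longrightarrow> v \<in> set b"
    "Suc (sum_list g) = sum_list b"
proof -
  have "k \<in> set b \<and> (2 \<le> k \<longrightarrow> k - 1 \<in> set g) \<and> (\<forall>v. v \<in> set b \<longrightarrow> v \<noteq> k \<longrightarrow> v \<in> set g)
     \<and> (\<forall>v. v \<in> set g \<longrightarrow> v \<noteq> k - 1 \<longrightarrow> v \<in> set b) \<and> Suc (sum_list g) = sum_list b"
    using assms(1)
  proof (induction b arbitrary: g rule: rev_induct)
    case Nil
    then show ?case by (simp add: dop_Some_Nil)
  next
    case (snoc x xs)
    show ?case
    proof (cases "x = k")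
      case True
      then show ?thesis using snoc.prems assms(2) by (auto simp: dop_Some_snoc split: if_splits)
    next
      case False
      then obtain g' where "dop k (Some xs) = Some g'" "g = g' @ [x]"
        using snoc.prems by (auto simp: dop_Some_snoc)
      then show ?thesis using snoc.IH False by auto
    qed
  qed
  then show "k \<in> set b" "2 \<le> k \<Longrightarrow> k - 1 \<in> set g"
    "\<And>v. v \<in> set b \<Longrightarrow> v \<noteq> k \<Longrightarrow> v \<in> set g"
    "\<And>v. v \<in> set g \<Longrightarrow> v \<noteq> k - 1 \<Longrightarrow> v \<in> set b" "Suc (sum_list g) = sum_list b"
    by blast+
qed

lemma dop_Some_no_zero:
  "dop k (Some b) = Some g \<Longrightarrow> 1 \<le> k \<Longrightarrow> 0 \<notin> set b \<Longrightarrow> 0 \<notin> set g"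
proof (induction b arbitrary: g rule: rev_induct)
  case Nil
  then show ?case by (simp add: dop_Some_Nil)
next
  case (snoc x xs)
  then show ?case by (cases "x = k") (auto simp: dop_Some_snoc split: if_splits)
qed

text \<open>\<^term>\<open>vop_list k b\<close> is \<^term>\<open>vop k (Some b)\<close>, unfolded so that the
  recursion runs over the deletions in the order in which they are applied.\<close>

fun vop_list :: "nat \<Rightarrow> nat list \<Rightarrow> nat list option" where
  "vop_list 0 b = Some b"
| "vop_list (Suc k) b = (case dop (Suc k) (Some b) of None \<Rightarrow> None | Some g \<Rightarrow> vop_list k g)"

lemma vop_None: "vop k None = None"
  by (induction k) auto

lemma vop_Some: "vop k (Some b) = vop_list k b"
proof (induction k arbitrary: b)
  case (Suc k)
  then show ?case by (cases "dop (Suc k) (Some b)") (auto simp: vop_None)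
qed simp

lemma uop_Some: "uop i (Some b) = map_option (\<lambda>g. g @ [i]) (vop_list (i - 1) b)"
  by (simp add: uop_def aop_def vop_Some)

lemma vop_list_SomeD:
  assumes "vop_list k b = Some g"
  shows "1 \<le> k \<Longrightarrow> k \<in> set b" "\<And>v. k < v \<Longrightarrow> v \<in> set g \<longleftrightarrow> v \<in> set b"
    "0 \<notin> set b \<longleftrightarrow> 0 \<notin> set g" "sum_list g + k = sum_list b"
proof -
  have "(1 \<le> k \<longrightarrow> k \<in> set b) \<and> (\<forall>v. k < v \<longrightarrow> (v \<in> set g \<longleftrightarrow> v \<in> set b))
      \<and> (0 \<notin> set b \<longleftrightarrow> 0 \<notin> set g) \<and> sum_list g + k = sum_list b"
    using assms
  proof (induction k arbitrary: b)
    case (Suc k)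
    then obtain g1 where g1: "dop (Suc k) (Some b) = Some g1" "vop_list k g1 = Some g"
      by (cases "dop (Suc k) (Some b)") auto
    note d = dop_SomeD[OF g1(1), simplified] and IH = Suc.IH[OF g1(2)]
    have "0 \<notin> set b \<Longrightarrow> 0 \<notin> set g1"
      using dop_Some_no_zero[OF g1(1)] by simp
    then have "0 \<notin> set b \<longleftrightarrow> 0 \<notin> set g"
      using d(3)[of 0] IH by auto
    moreover have "v \<in> set g \<longleftrightarrow> v \<in> set b" if "Suc k < v" for v
      using that d(3)[of v] d(4)[of v] IH by auto
    ultimately show ?case using d(1,5) IH by simp
  qed simp
  then show "1 \<le> k \<Longrightarrow> k \<in> set b" "\<And>v. k < v \<Longrightarrow> v \<in> set g \<longleftrightarrow> v \<in> set b"
    "0 \<notin> set b \<longleftrightarrow> 0 \<notin> set g" "sum_list g + k = sum_list b"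
    by blast+
qed

section \<open>Multisets of partial images\<close>

definition mset_option :: "'a option \<Rightarrow> 'a multiset" where
  "mset_option x = (case x of None \<Rightarrow> {#} | Some a \<Rightarrow> {#a#})"

definition image_mset_partial :: "('a \<Rightarrow> 'b option) \<Rightarrow> 'a multiset \<Rightarrow> 'b multiset" where
  "image_mset_partial f M = (\<Sum>x\<in>#M. mset_option (f x))"

lemma mset_option_simps [simp]: "mset_option None = {#}" "mset_option (Some a) = {#a#}"
  by (simp_all add: mset_option_def)

lemma mset_option_map_option: "mset_option (map_option h x) = image_mset h (mset_option x)"
  by (cases x) auto

lemma image_mset_partial_empty [simp]: "image_mset_partial f {#} = {#}"
  by (simp add: image_mset_partial_def)

lemma image_mset_partial_add [simp]:
  "image_mset_partial f (M + N) = image_mset_partial f M + image_mset_partial f N"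
  by (simp add: image_mset_partial_def)

lemma image_mset_partial_add_mset [simp]:
  "image_mset_partial f (add_mset a M) = mset_option (f a) + image_mset_partial f M"
  by (simp add: image_mset_partial_def)

lemma image_mset_partial_image_mset [simp]:
  "image_mset_partial f (image_mset g M) = image_mset_partial (\<lambda>x. f (g x)) M"
  by (induction M) auto

lemma image_mset_partial_map_option:
  "image_mset_partial (\<lambda>x. map_option h (f x)) M = image_mset h (image_mset_partial f M)"
  by (induction M) (auto simp: mset_option_map_option)

lemma image_mset_partial_Some [simp]: "image_mset_partial (\<lambda>x. Some (h x)) M = image_mset h M"
  by (induction M) auto

lemma image_mset_partial_bind:
  "image_mset_partial (\<lambda>y. case f y of None \<Rightarrow> None | Some z \<Rightarrow> g z) M
     = image_mset_partial g (image_mset_partial f M)"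
  by (induction M) (auto split: option.splits)

lemma count_sum_mset_image_mset:
  "count (\<Sum>y\<in>#M. f y) a = (\<Sum>y\<in>#M. count (f y) a)"
  by (induction M) auto

lemma sum_mset_image_mset_sum:
  "(\<Sum>y\<in>#M. \<Sum>i\<in>I. f i y) = (\<Sum>i\<in>I. \<Sum>y\<in>#M. f i y)"
  by (induction M) (auto simp: sum.distrib)

lemma sum_mset_image_mset_over_sum:
  "finite I \<Longrightarrow> (\<Sum>y\<in>#(\<Sum>i\<in>I. M i). g y) = (\<Sum>i\<in>I. \<Sum>y\<in>#M i. g y)"
  by (induction I rule: finite_induct) auto

lemma sum_mset_image_mset_eq_sum_count:
  fixes f :: "'a \<Rightarrow> nat"
  assumes "finite S" "set_mset M \<subseteq> S"
  shows "(\<Sum>y\<in>#M. f y) = (\<Sum>y\<in>S. count M y * f y)"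
  using assms(2)
proof (induction M)
  case (add x M)
  then have "(\<Sum>y\<in>#add_mset x M. f y) = (\<Sum>y\<in>S. (if y = x then f y else 0)) + (\<Sum>y\<in>S. count M y * f y)"
    using assms(1) by (simp add: sum.delta')
  also have "\<dots> = (\<Sum>y\<in>S. count (add_mset x M) y * f y)"
    by (subst sum.distrib[symmetric]) (rule sum.cong, auto)
  finally show ?case .
qed simp

section \<open>The up operator of the composition poset \<open>L\<^sub>c\<close>\<close>

definition up_L :: "nat list \<Rightarrow> nat list multiset" where
  "up_L b = add_mset (1 # b) (mset (map (\<lambda>r. b[r := Suc (b ! r)])
       (filter (\<lambda>r. b ! r \<notin> set (take r b)) [0..<length b])))"

definition up_L_opt :: "nat list option \<Rightarrow> nat list multiset" where
  "up_L_opt x = (case x of None \<Rightarrow> {#} | Some b \<Rightarrow> up_L b)"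

lemma up_L_opt_simps [simp]: "up_L_opt None = {#}" "up_L_opt (Some b) = up_L b"
  by (simp_all add: up_L_opt_def)

lemma up_L_Nil: "up_L [] = {#[1]#}"
  by (simp add: up_L_def)

lemma up_L_snoc:
  "up_L (g @ [x]) = image_mset (\<lambda>y. y @ [x]) (up_L g)
     + (if x \<in> set g then {#} else {#g @ [Suc x]#})"
proof -
  let ?P = "\<lambda>r. g ! r \<notin> set (take r g)"
  let ?Q = "\<lambda>r. (g @ [x]) ! r \<notin> set (take r (g @ [x]))"
  let ?inc = "\<lambda>r. (g @ [x])[r := Suc ((g @ [x]) ! r)]"
  have "filter ?Q [0..<length g] = filter ?P [0..<length g]"
    by (rule filter_cong) (auto simp: nth_append)
  moreover have "map ?inc (filter ?P [0..<length g])
     = map (\<lambda>y. y @ [x]) (map (\<lambda>r. g[r := Suc (g ! r)]) (filter ?P [0..<length g]))"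
    by (auto simp: nth_append list_update_append)
  moreover have "?inc (length g) = g @ [Suc x]"
    by (simp add: list_update_append)
  ultimately have "map ?inc (filter ?Q [0..<length (g @ [x])])
     = map (\<lambda>y. y @ [x]) (map (\<lambda>r. g[r := Suc (g ! r)]) (filter ?P [0..<length g]))
       @ (if x \<in> set g then [] else [g @ [Suc x]])"
    by simp
  then have "mset (map ?inc (filter ?Q [0..<length (g @ [x])]))
     = image_mset (\<lambda>y. y @ [x]) (mset (map (\<lambda>r. g[r := Suc (g ! r)]) (filter ?P [0..<length g])))
       + (if x \<in> set g then {#} else {#g @ [Suc x]#})"
    by (simp only: mset_append mset_map) auto
  then show ?thesis
    unfolding up_L_def by simp
qed

section \<open>The deletion operators commute with \<^const>\<open>up_L\<close> up to a correction\<close>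

lemma dop_up_L_snoc_self:
  assumes "1 \<le> k"
  shows "image_mset_partial (\<lambda>y. dop k (Some y)) (up_L (g @ [k]))
     = image_mset (\<lambda>y. if k = 1 then y else y @ [k - 1]) (up_L g)"
proof -
  have "image_mset_partial (\<lambda>y. dop k (Some y)) (if k \<in> set g then {#} else {#g @ [Suc k]#}) = {#}"
    using assms dop_Some_eq_None_iff[of k g] by (auto simp: dop_Some_snoc)
  then show ?thesis
    by (simp add: up_L_snoc dop_Some_snoc)
qed

lemma dop_up_L:
  assumes k: "1 \<le> k" and b: "0 \<notin> set b"
  shows "image_mset_partial (\<lambda>y. dop k (Some y)) (up_L b)
          + (if k \<in> set b \<and> \<not> (k = 1 \<or> k - 1 \<in> set b) then {#b#} else {#})
       = up_L_opt (dop k (Some b))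
          + (if (k = 1 \<or> k - 1 \<in> set b) \<and> k \<notin> set b then {#b#} else {#})"
  using b
proof (induction b rule: rev_induct)
  case Nil
  show ?case using k by (auto simp: up_L_Nil dop_Some_snoc[of _ "[]", simplified] dop_Some_Nil)
next
  case (snoc x g)
  let ?d = "\<lambda>y. dop k (Some y)"
  show ?case
  proof (cases "x = k")
    case True
    then show ?thesis
      using dop_up_L_snoc_self[OF k, of g] k by (auto simp: up_L_snoc dop_Some_snoc)
  next
    case x: False
    define X where "X = image_mset (\<lambda>y. y @ [x]) (image_mset_partial ?d (up_L g))"
    have lhs: "image_mset_partial ?d (up_L (g @ [x]))
        = X + image_mset_partial ?d (if x \<in> set g then {#} else {#g @ [Suc x]#})"
      using x unfolding X_def by (simp add: up_L_snoc dop_Some_snoc image_mset_partial_map_option)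
    have IH: "X + (if k \<in> set g \<and> \<not> (k = 1 \<or> k - 1 \<in> set g) then {#g @ [x]#} else {#})
       = image_mset (\<lambda>y. y @ [x]) (up_L_opt (dop k (Some g)))
          + (if (k = 1 \<or> k - 1 \<in> set g) \<and> k \<notin> set g then {#g @ [x]#} else {#})"
      using arg_cong[OF snoc.IH, of "image_mset (\<lambda>y. y @ [x])"] snoc.prems
      unfolding X_def by (auto split: if_splits)
    show ?thesis
    proof (cases "dop k (Some g)")
      case None
      then have "k \<notin> set g" using dop_Some_eq_None_iff by blast
      moreover have "image_mset_partial ?d (if x \<in> set g then {#} else {#g @ [Suc x]#})
             = (if x \<notin> set g \<and> Suc x = k then {#g @ [x]#} else {#})"
        using None x snoc.prems by (auto simp: dop_Some_snoc)
      ultimately show ?thesis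
        using IH None x snoc.prems by (auto simp: lhs dop_Some_snoc split: if_splits)
    next
      case (Some g')
      note d = dop_SomeD[OF Some k]
      have dx: "dop k (Some (g @ [x])) = Some (g' @ [x])"
        using Some x by (simp add: dop_Some_snoc)
      have new: "image_mset_partial ?d (if x \<in> set g then {#} else {#g @ [Suc x]#})
             = (if x \<notin> set g then (if Suc x = k then {#g @ [x]#} else {#g' @ [Suc x]#}) else {#})"
        using Some x snoc.prems by (auto simp: dop_Some_snoc)
      show ?thesis
      proof (cases "Suc x = k")
        case True
        then have "x \<in> set g'" "k - 1 = x" "x \<noteq> 0"
          using d snoc.prems by auto
        then show ?thesis using IH dx new x d(1) True Some
          by (cases "x \<in> set g") (simp_all add: lhs up_L_snoc[of g' x])
      next
        case False
        then have "x \<in> set g' \<longleftrightarrow> x \<in> set g" "k - 1 \<noteq> x"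
          using d x k by auto
        then show ?thesis using IH dx new d(1) False Some
          by (simp add: lhs up_L_snoc[of g' x] ac_simps)
      qed
    qed
  qed
qed

lemma vop_list_up_L:
  assumes "0 \<notin> set b"
  shows "image_mset_partial (vop_list (Suc n)) (up_L b) = up_L_opt (vop_list (Suc n) b)
     + (if Suc n \<notin> set b \<and> (n = 0 \<or> n \<in> set b) then mset_option (vop_list n b) else {#})"
  using assms
proof (induction n arbitrary: b)
  case 0
  have "vop_list (Suc 0) = (\<lambda>y. dop 1 (Some y))"
    by (rule ext, case_tac "dop 1 (Some y)") auto
  then show ?case using dop_up_L[of 1 b] 0 by simp
next
  case (Suc n)
  let ?k = "Suc (Suc n)"
  let ?d = "\<lambda>y. dop ?k (Some y)"
  let ?v = "vop_list (Suc n)"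
  have "vop_list ?k = (\<lambda>y. case ?d y of None \<Rightarrow> None | Some z \<Rightarrow> ?v z)"
    by (rule ext) simp
  then have bind: "image_mset_partial (vop_list ?k) M = image_mset_partial ?v (image_mset_partial ?d M)"
    for M by (simp only: image_mset_partial_bind)
  have "image_mset_partial ?v (image_mset_partial ?d (up_L b))
        + (if ?k \<in> set b \<and> Suc n \<notin> set b then mset_option (?v b) else {#})
      = image_mset_partial ?v (up_L_opt (?d b))
        + (if Suc n \<in> set b \<and> ?k \<notin> set b then mset_option (?v b) else {#})"
    using arg_cong[OF dop_up_L[of ?k b], of "image_mset_partial ?v"] Suc.prems
    by (simp add: if_distrib[of "image_mset_partial _"] cong: if_cong)
  moreover have "image_mset_partial ?v (up_L_opt (?d b)) = up_L_opt (vop_list ?k b)"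
  proof (cases "?d b")
    case (Some g)
    have "0 \<notin> set g" using dop_Some_no_zero[OF Some] Suc.prems by simp
    moreover have "Suc n \<in> set g" using dop_SomeD(2)[OF Some] by simp
    moreover have "vop_list ?k b = ?v g" using Some by simp
    ultimately show ?thesis using Suc.IH Some by (simp del: vop_list.simps)
  qed simp
  moreover have "Suc n \<notin> set b \<Longrightarrow> ?v b = None"
    using vop_list_SomeD(1)[of "Suc n" b] by (cases "?v b") auto
  ultimately show ?case
    unfolding bind by (cases "Suc n \<in> set b"; cases "?k \<in> set b") (simp_all del: vop_list.simps)
qed

section \<open>The up operator of \<open>R\<^sub>c\<close> and the commutation relation\<close>

text \<open>Only the indices \<open>i \<le> sum_list b + 1\<close> contribute to the covers \<^term>\<open>uop i (Some b)\<close>,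
  so the cut-off \<open>N\<close> is harmless once it is large enough.\<close>

definition up_R :: "nat \<Rightarrow> nat list \<Rightarrow> nat list multiset" where
  "up_R N b = (\<Sum>i\<in>{1..<N}. mset_option (uop i (Some b)))"

text \<open>The \<open>L\<^sub>c\<close>-cover of \<^term>\<open>uop i (Some b)\<close> obtained by incrementing its last part \<open>i\<close>,
  when this is its leftmost occurrence.\<close>

definition last_increment :: "nat \<Rightarrow> nat list \<Rightarrow> nat list multiset" where
  "last_increment i b = (case vop_list (i - 1) b of None \<Rightarrow> {#}
      | Some g \<Rightarrow> if i \<in> set g then {#} else {#g @ [Suc i]#})"

lemma up_L_uop:
  "(\<Sum>y\<in>#mset_option (uop i (Some b)). up_L y)
     = image_mset (\<lambda>y. y @ [i]) (up_L_opt (vop_list (i - 1) b)) + last_increment i b"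
  by (cases "vop_list (i - 1) b") (simp_all add: uop_Some last_increment_def up_L_snoc)

lemma uop_up_L:
  assumes "0 \<notin> set b" "1 \<le> i"
  shows "(\<Sum>y\<in>#up_L b. mset_option (uop i (Some y)))
     = image_mset (\<lambda>y. y @ [i]) (up_L_opt (vop_list (i - 1) b))
       + (if i = 1 then {#} else last_increment (i - 1) b)"
proof -
  have lhs: "(\<Sum>y\<in>#up_L b. mset_option (uop i (Some y)))
      = image_mset (\<lambda>y. y @ [i]) (image_mset_partial (vop_list (i - 1)) (up_L b))"
    using image_mset_partial_map_option[of "\<lambda>g. g @ [i]" "vop_list (i - 1)" "up_L b"]
    by (simp add: image_mset_partial_def uop_Some)
  consider "i = 1" | n where "i = Suc (Suc n)"
    using assms(2) by (cases i; cases "i - 1") auto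
  then show ?thesis
  proof cases
    case 1
    have "vop_list 0 = Some" by (rule ext) simp
    then show ?thesis using lhs 1 by simp
  next
    case (2 n)
    have "image_mset (\<lambda>y. y @ [Suc (Suc n)]) (if Suc n \<notin> set b \<and> (n = 0 \<or> n \<in> set b)
        then mset_option (vop_list n b) else {#}) = last_increment (Suc n) b"
    proof (cases "vop_list n b")
      case (Some g)
      have "Suc n \<in> set g \<longleftrightarrow> Suc n \<in> set b"
        using vop_list_SomeD(2)[OF Some] by simp
      moreover have "n = 0 \<or> n \<in> set b"
        using vop_list_SomeD(1)[OF Some] by (metis One_nat_def Suc_leI neq0_conv)
      ultimately show ?thesis using Some by (simp add: last_increment_def)
    qed (simp add: last_increment_def)
    then show ?thesis using lhs 2 vop_list_up_L[OF assms(1), of n] by simp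
  qed
qed

lemma last_increment_eq_empty:
  assumes "sum_list b + 2 \<le> i"
  shows "last_increment i b = {#}"
proof (cases "vop_list (i - 1) b")
  case (Some g)
  then have "i - 1 \<in> set b"
    using vop_list_SomeD(1) assms by simp
  then have "i - 1 \<le> sum_list b"
    by (simp add: member_le_sum_list)
  then show ?thesis using assms by simp
qed (simp add: last_increment_def)

lemma sum_atLeastLessThan_shift:
  fixes f :: "nat \<Rightarrow> 'a::comm_monoid_add"
  assumes "f M = 0"
  shows "(\<Sum>i\<in>{1..<Suc M}. if i = 1 then 0 else f (i - 1)) = (\<Sum>i\<in>{1..<Suc M}. f i)"
proof -
  have "(\<Sum>i\<in>{1..<Suc M}. if i = 1 then 0 else f (i - 1)) = (\<Sum>i\<in>{Suc 1..<Suc M}. f (i - 1))"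
    by (cases M) (simp_all add: sum.atLeast_Suc_lessThan)
  also have "\<dots> = (\<Sum>i\<in>{1..<M}. f i)"
    by (simp only: sum.shift_bounds_Suc_ivl) simp
  also have "\<dots> = (\<Sum>i\<in>{1..<Suc M}. f i)"
    using assms by (cases M) simp_all
  finally show ?thesis .
qed

lemma up_R_up_L_commute:
  assumes b: "0 \<notin> set b" and N: "sum_list b + 3 \<le> N"
  shows "(\<Sum>y\<in>#up_L b. up_R N y) = (\<Sum>y\<in>#up_R N b. up_L y)"
proof -
  define T where "T i = image_mset (\<lambda>y. y @ [i]) (up_L_opt (vop_list (i - 1) b))" for i
  obtain M where M: "N = Suc M" "sum_list b + 2 \<le> M"
    using N by (cases N) auto
  have "(\<Sum>y\<in>#up_L b. up_R N y) = (\<Sum>i\<in>{1..<N}. \<Sum>y\<in>#up_L b. mset_option (uop i (Some y)))"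
    unfolding up_R_def by (rule sum_mset_image_mset_sum)
  also have "\<dots> = (\<Sum>i\<in>{1..<N}. T i + (if i = 1 then {#} else last_increment (i - 1) b))"
    unfolding T_def using uop_up_L[OF b] by (intro sum.cong) auto
  \<comment> \<open>the correction term of index \<open>i + 1\<close> is the extra \<open>L\<^sub>c\<close>-cover of \<open>u\<^sub>i b\<close>\<close>
  also have "\<dots> = (\<Sum>i\<in>{1..<N}. T i) + (\<Sum>i\<in>{1..<N}. last_increment i b)"
    unfolding sum.distrib M(1)
    using sum_atLeastLessThan_shift[of "\<lambda>i. last_increment i b", OF last_increment_eq_empty[OF M(2)]]
    by simp
  also have "\<dots> = (\<Sum>i\<in>{1..<N}. \<Sum>y\<in>#mset_option (uop i (Some b)). up_L y)"
    unfolding up_L_uop T_def by (simp add: sum.distrib)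
  also have "\<dots> = (\<Sum>y\<in>#up_R N b. up_L y)"
    unfolding up_R_def by (rule sum_mset_image_mset_over_sum[symmetric]) simp
  finally show ?thesis .
qed

section \<open>Counting saturated chains of \<open>R\<^sub>c\<close>\<close>

definition compositions_of :: "nat \<Rightarrow> nat list set" where
  "compositions_of n = {b. is_composition b \<and> sum_list b = n}"

lemma length_le_sum_list: "is_composition b \<Longrightarrow> length b \<le> sum_list b"
  by (induction b) (auto simp: is_composition_def)

lemma finite_compositions_of: "finite (compositions_of n)"
proof (rule finite_subset)
  show "compositions_of n \<subseteq> {xs. set xs \<subseteq> {0..n} \<and> length xs \<le> n}"
    using length_le_sum_list member_le_sum_list by (fastforce simp: compositions_of_def)
  show "finite {xs. set xs \<subseteq> {0..n} \<and> length xs \<le> n}"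
    by (rule finite_lists_length_le) simp
qed

lemma compositions_of_0: "compositions_of 0 = {[]}"
proof -
  have "b = []" if "is_composition b" "sum_list b = 0" for b
    using that by (cases b) (auto simp: is_composition_def)
  then show ?thesis by (auto simp: compositions_of_def is_composition_def)
qed

lemma compositions_of_1: "compositions_of 1 = {[1]}"
proof -
  have "a = [1]" if "is_composition a" "sum_list a = 1" for a
  proof (cases a)
    case (Cons x xs)
    then have "0 < x" "x + sum_list xs = 1" "is_composition xs"
      using that by (auto simp: is_composition_def)
    then have "x = 1" "xs \<in> compositions_of 0"
      unfolding compositions_of_def by (simp_all del: sum_list_eq_0_iff)
    then show ?thesis using Cons compositions_of_0 by simp
  qed (use that in simp)
  then show ?thesis by (auto simp: compositions_of_def is_composition_def)
qed

lemma covers_rD: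
  assumes "covers_r b a"
  shows "sum_list a = Suc (sum_list b)" "is_composition a \<longleftrightarrow> is_composition b"
proof -
  obtain i g where i: "1 \<le> i" "vop_list (i - 1) b = Some g" "a = g @ [i]"
    using assms by (auto simp: covers_r_def uop_Some)
  note v = vop_list_SomeD[OF i(2)]
  show "sum_list a = Suc (sum_list b)" using v(4) i by simp
  show "is_composition a \<longleftrightarrow> is_composition b"
    using v(3) i by (auto simp: is_composition_def intro: gr0I)
qed

lemma covers_r_Nil: "covers_r [] [1]"
  by (auto simp: covers_r_def uop_Some intro!: exI[of _ 1])

lemma successively_iff_nth:
  "successively P xs \<longleftrightarrow> (\<forall>k. Suc k < length xs \<longrightarrow> P (xs ! k) (xs ! Suc k))"
  by (induction P xs rule: successively.induct) (auto simp: nth_Cons split: nat.splits)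

lemma chains_to_iff:
  "cs \<in> chains_to a \<longleftrightarrow>
     (cs = [[]] \<and> a = []) \<or> (\<exists>cs'. cs = cs' @ [a] \<and> cs' \<in> chains_to (last cs') \<and> covers_r (last cs') a)"
proof -
  have "cs \<in> chains_to a \<longleftrightarrow> cs \<noteq> [] \<and> hd cs = [] \<and> last cs = a \<and> successively covers_r cs"
    by (simp add: chains_to_def successively_iff_nth)
  also have "\<dots> \<longleftrightarrow> (cs = [[]] \<and> a = []) \<or> (\<exists>cs'. cs = cs' @ [a] \<and> cs' \<noteq> [] \<and> hd cs' = []
      \<and> successively covers_r cs' \<and> covers_r (last cs') a)"
  proof
    assume c: "cs \<noteq> [] \<and> hd cs = [] \<and> last cs = a \<and> successively covers_r cs"
    then obtain cs' where cs: "cs = cs' @ [a]"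
      by (metis append_butlast_last_id)
    show "(cs = [[]] \<and> a = []) \<or> (\<exists>cs'. cs = cs' @ [a] \<and> cs' \<noteq> [] \<and> hd cs' = []
      \<and> successively covers_r cs' \<and> covers_r (last cs') a)"
    proof (cases "cs' = []")
      case False
      then show ?thesis using c cs by (auto simp: successively_append_iff)
    qed (use c cs in simp)
  qed (auto simp: successively_append_iff)
  finally show ?thesis
    by (simp add: chains_to_def successively_iff_nth)
qed

lemma chains_to_Nil: "chains_to [] = {[[]]}"
proof -
  have "\<not> covers_r b []" for b
    using covers_rD(1) by fastforce
  then show ?thesis
    using chains_to_iff[of _ "[]"] by blast
qed

lemma chains_to_snoc:
  assumes "a \<noteq> []"
  shows "chains_to a = (\<Union>b\<in>{b. covers_r b a}. (\<lambda>cs. cs @ [a]) ` chains_to b)"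
proof (intro equalityI subsetI)
  fix cs assume "cs \<in> chains_to a"
  then obtain cs' where "cs = cs' @ [a]" "cs' \<in> chains_to (last cs')" "covers_r (last cs') a"
    using assms chains_to_iff by blast
  then show "cs \<in> (\<Union>b\<in>{b. covers_r b a}. (\<lambda>cs. cs @ [a]) ` chains_to b)" by blast
next
  fix cs assume "cs \<in> (\<Union>b\<in>{b. covers_r b a}. (\<lambda>cs. cs @ [a]) ` chains_to b)"
  then obtain b cs' where "covers_r b a" "cs' \<in> chains_to b" "cs = cs' @ [a]" by blast
  moreover have "last cs' = b" using \<open>cs' \<in> chains_to b\<close> by (simp add: chains_to_def)
  ultimately show "cs \<in> chains_to a" using chains_to_iff by blast
qed

lemma finite_chains_to: "is_composition a \<Longrightarrow> finite (chains_to a)"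
proof (induction "sum_list a" arbitrary: a)
  case 0
  then have "a = []" using compositions_of_0 by (auto simp: compositions_of_def)
  then show ?case by (simp add: chains_to_Nil)
next
  case (Suc n)
  then have "a \<noteq> []" by auto
  moreover have "{b. covers_r b a} \<subseteq> compositions_of n"
    using Suc.hyps Suc.prems covers_rD by (auto simp: compositions_of_def)
  then have "finite {b. covers_r b a}"
    using finite_compositions_of finite_subset by blast
  moreover have "finite (chains_to b)" if "covers_r b a" for b
    using Suc that covers_rD by auto
  ultimately show ?case by (simp add: chains_to_snoc)
qed

lemma card_chains_to_rec:
  assumes a: "a \<in> compositions_of (Suc n)"
  shows "card (chains_to a) = (\<Sum>b\<in>compositions_of n. card (chains_to b) * (if covers_r b a then 1 else 0))"
proof -
  have ac: "is_composition a" "a \<noteq> []" using a by (auto simp: compositions_of_def)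
  let ?P = "{b. covers_r b a}"
  have P: "?P = {b \<in> compositions_of n. covers_r b a}"
    using covers_rD a by (auto simp: compositions_of_def)
  have "card (chains_to a) = card (\<Union>b\<in>?P. (\<lambda>cs. cs @ [a]) ` chains_to b)"
    using chains_to_snoc[OF ac(2)] by simp
  also have "\<dots> = (\<Sum>b\<in>?P. card ((\<lambda>cs. cs @ [a]) ` chains_to b))"
  proof (rule card_UN_disjoint)
    show "finite ?P" unfolding P using finite_compositions_of by simp
    show "\<forall>b\<in>?P. finite ((\<lambda>cs. cs @ [a]) ` chains_to b)"
      using finite_chains_to covers_rD(2) ac(1) by blast
  qed (auto simp: chains_to_def)
  also have "\<dots> = (\<Sum>b\<in>?P. card (chains_to b))"
    by (rule sum.cong) (auto intro!: card_image simp: inj_on_def)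
  also have "\<dots> = (\<Sum>b\<in>compositions_of n. if covers_r b a then card (chains_to b) else 0)"
    unfolding P using finite_compositions_of by (rule sum.inter_filter)
  finally show ?thesis by (simp add: if_distrib cong: if_cong)
qed

lemma uop_SomeD:
  assumes "uop i (Some b) = Some a" "1 \<le> i"
  shows "i \<le> sum_list b + 1" "last a = i"
proof -
  obtain g where g: "vop_list (i - 1) b = Some g" "a = g @ [i]"
    using assms(1) by (auto simp: uop_Some)
  show "last a = i" using g(2) by simp
  show "i \<le> sum_list b + 1"
  proof (cases "i = 1")
    case False
    then have "i - 1 \<in> set b" using vop_list_SomeD(1)[OF g(1)] assms(2) by simp
    then show ?thesis using member_le_sum_list[of "i - 1" b] by simp
  qed simp
qed

lemma count_mset_option: "count (mset_option x) a = (if x = Some a then 1 else 0)"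
  by (cases x) auto

lemma count_up_R:
  assumes "sum_list b + 2 \<le> N"
  shows "count (up_R N b) a = (if covers_r b a then 1 else 0)"
proof -
  have "{i \<in> {1..<N}. uop i (Some b) = Some a} = (if covers_r b a then {last a} else {})"
  proof (cases "covers_r b a")
    case True
    then obtain i where "1 \<le> i" "uop i (Some b) = Some a" by (auto simp: covers_r_def)
    moreover have "j = last a" if "1 \<le> j" "uop j (Some b) = Some a" for j
      using uop_SomeD(2)[OF that(2,1)] by simp
    ultimately show ?thesis using uop_SomeD(1) assms True by fastforce
  qed (auto simp: covers_r_def)
  moreover have "(\<Sum>i\<in>{1..<N}. if uop i (Some b) = Some a then 1 else 0::nat)
      = card {i \<in> {1..<N}. uop i (Some b) = Some a}"
    by (simp flip: sum.inter_filter)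
  ultimately have "(\<Sum>i\<in>{1..<N}. if uop i (Some b) = Some a then 1 else 0::nat)
      = (if covers_r b a then 1 else 0)"
    by simp
  then show ?thesis
    by (simp add: up_R_def count_sum count_mset_option)
qed

lemma up_L_subset:
  assumes b: "is_composition b"
  shows "set_mset (up_L b) \<subseteq> compositions_of (Suc (sum_list b))"
proof
  fix x assume "x \<in># up_L b"
  then consider "x = 1 # b" | r where "r < length b" "x = b[r := Suc (b ! r)]"
    by (auto simp: up_L_def)
  then show "x \<in> compositions_of (Suc (sum_list b))"
  proof cases
    case 1
    then show ?thesis using b by (simp add: compositions_of_def is_composition_def)
  next
    case (2 r)
    then show ?thesis using b sum_list_update[of r b "Suc (b ! r)"] elem_le_sum_list[of r b]
      by (auto simp: compositions_of_def is_composition_def dest: set_update_subset_insert[THEN subsetD])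
  qed
qed

lemma up_R_subset:
  assumes "is_composition b"
  shows "set_mset (up_R N b) \<subseteq> compositions_of (Suc (sum_list b))"
proof
  fix x assume "x \<in># up_R N b"
  then obtain i where "i \<in> {1..<N}" "x \<in># mset_option (uop i (Some b))"
    by (auto simp: up_R_def set_mset_sum)
  then have "i \<in> {1..<N}" "uop i (Some b) = Some x"
    by (auto simp: mset_option_def split: option.splits)
  then have "covers_r b x" by (auto simp: covers_r_def)
  then show "x \<in> compositions_of (Suc (sum_list b))"
    using covers_rD assms by (auto simp: compositions_of_def is_composition_def)
qed

lemma count_up_R_up_L_commute:
  assumes b: "b \<in> compositions_of m"
  shows "(\<Sum>y\<in>compositions_of (Suc m). count (up_L b) y * count (up_R (m + 3) y) a)
       = (\<Sum>y\<in>compositions_of (Suc m). count (up_R (m + 3) b) y * count (up_L y) a)"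
proof -
  have bc: "is_composition b" "sum_list b = m" "0 \<notin> set b"
    using b by (auto simp: compositions_of_def is_composition_def)
  have "(\<Sum>y\<in>compositions_of (Suc m). count (up_L b) y * count (up_R (m + 3) y) a)
      = count (\<Sum>y\<in>#up_L b. up_R (m + 3) y) a"
    using sum_mset_image_mset_eq_sum_count[OF finite_compositions_of up_L_subset[OF bc(1)]] bc
    by (simp add: count_sum_mset_image_mset)
  also have "\<dots> = count (\<Sum>y\<in>#up_R (m + 3) b. up_L y) a"
    using up_R_up_L_commute[OF bc(3)] bc by simp
  also have "\<dots> = (\<Sum>y\<in>compositions_of (Suc m). count (up_R (m + 3) b) y * count (up_L y) a)"
    using sum_mset_image_mset_eq_sum_count[OF finite_compositions_of up_R_subset[OF bc(1)]] bc
    by (simp add: count_sum_mset_image_mset)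
  finally show ?thesis .
qed

lemma sum_sum_mult_swap:
  fixes f :: "'b \<Rightarrow> nat"
  shows "(\<Sum>y\<in>Y. (\<Sum>b\<in>B. f b * g b y) * h y) = (\<Sum>b\<in>B. f b * (\<Sum>y\<in>Y. g b y * h y))"
  by (simp add: sum_distrib_left sum_distrib_right mult.assoc sum.swap[of _ Y])

lemma card_chains_to_rec_up_L:
  "a \<in> compositions_of (Suc n)
     \<Longrightarrow> card (chains_to a) = (\<Sum>b\<in>compositions_of n. card (chains_to b) * count (up_L b) a)"
proof (induction n arbitrary: a)
  case 0
  then have "a = [1]"
    using compositions_of_1 by simp
  then show ?case
    using card_chains_to_rec[OF 0] covers_r_Nil by (simp add: compositions_of_0 up_L_Nil)
next
  case (Suc m)
  let ?F = "\<lambda>x. card (chains_to x)" and ?C = compositions_of and ?N = "m + 3"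
  have up_R: "count (up_R ?N y) x = (if covers_r y x then 1 else 0)" if "y \<in> ?C k" "k \<le> Suc m" for x y k
    using that by (intro count_up_R) (simp add: compositions_of_def)
  have "?F a = (\<Sum>y\<in>?C (Suc m). ?F y * count (up_R ?N y) a)"
    unfolding card_chains_to_rec[OF Suc.prems] using up_R by (intro sum.cong) auto
  also have "\<dots> = (\<Sum>y\<in>?C (Suc m). (\<Sum>b\<in>?C m. ?F b * count (up_L b) y) * count (up_R ?N y) a)"
    using Suc.IH by simp
  also have "\<dots> = (\<Sum>b\<in>?C m. ?F b * (\<Sum>y\<in>?C (Suc m). count (up_L b) y * count (up_R ?N y) a))"
    by (rule sum_sum_mult_swap)
  also have "\<dots> = (\<Sum>b\<in>?C m. ?F b * (\<Sum>y\<in>?C (Suc m). count (up_R ?N b) y * count (up_L y) a))"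
    by (simp add: count_up_R_up_L_commute)
  also have "\<dots> = (\<Sum>y\<in>?C (Suc m). (\<Sum>b\<in>?C m. ?F b * count (up_R ?N b) y) * count (up_L y) a)"
    by (rule sum_sum_mult_swap[symmetric])
  also have "\<dots> = (\<Sum>y\<in>?C (Suc m). ?F y * count (up_L y) a)"
  proof (rule sum.cong)
    fix y assume y: "y \<in> ?C (Suc m)"
    have "(\<Sum>b\<in>?C m. ?F b * count (up_R ?N b) y) = ?F y"
      by (subst card_chains_to_rec[OF y]) (use up_R in \<open>auto intro: sum.cong\<close>)
    then show "(\<Sum>b\<in>?C m. ?F b * count (up_R ?N b) y) * count (up_L y) a = ?F y * count (up_L y) a"
      by simp
  qed simp
  finally show ?case .
qed

section \<open>Removing the entry \<open>1\<close> of a standard reverse composition tableau\<close>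

lemma finite_cells: "finite (cells a)"
proof (rule finite_subset)
  show "cells a \<subseteq> {0..<length a} \<times> {0..<sum_list a}"
    using elem_le_sum_list by (fastforce simp: cells_def)
qed simp

lemma SRCTs_bij: "\<tau> \<in> SRCTs a \<Longrightarrow> bij_betw \<tau> (cells a) {1..sum_list a}"
  by (simp add: SRCTs_def is_SRCT_def)

lemma SRCTs_range: "\<tau> \<in> SRCTs a \<Longrightarrow> x \<in> cells a \<Longrightarrow> 1 \<le> \<tau> x \<and> \<tau> x \<le> sum_list a"
  using SRCTs_bij bij_betwE by fastforce

lemma SRCTs_inj: "\<tau> \<in> SRCTs a \<Longrightarrow> x \<in> cells a \<Longrightarrow> y \<in> cells a \<Longrightarrow> \<tau> x = \<tau> y \<Longrightarrow> x = y"
  using SRCTs_bij by (metis bij_betw_def inj_onD)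

lemma SRCTs_surj: "\<tau> \<in> SRCTs a \<Longrightarrow> 1 \<le> v \<Longrightarrow> v \<le> sum_list a \<Longrightarrow> \<exists>x\<in>cells a. \<tau> x = v"
  using SRCTs_bij by (metis atLeastAtMost_iff bij_betw_def imageE)

lemma SRCTs_outside: "\<tau> \<in> SRCTs a \<Longrightarrow> x \<notin> cells a \<Longrightarrow> \<tau> x = 0"
  unfolding SRCTs_def by (cases x) auto

lemma SRCTs_row: "\<tau> \<in> SRCTs a \<Longrightarrow> (r, c') \<in> cells a \<Longrightarrow> c < c' \<Longrightarrow> \<tau> (r, c') < \<tau> (r, c)"
  by (simp add: SRCTs_def is_SRCT_def)

lemma SRCTs_first_column: "\<tau> \<in> SRCTs a \<Longrightarrow> r < s \<Longrightarrow> s < length a \<Longrightarrow> \<tau> (r, 0) < \<tau> (s, 0)"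
  by (simp add: SRCTs_def is_SRCT_def)

lemma SRCTs_triple:
  "\<tau> \<in> SRCTs a \<Longrightarrow> r < s \<Longrightarrow> (s, Suc c) \<in> cells a \<Longrightarrow> (r, c) \<in> cells a
   \<Longrightarrow> \<tau> (s, Suc c) < \<tau> (r, c) \<Longrightarrow> (r, Suc c) \<in> cells a \<and> \<tau> (s, Suc c) < \<tau> (r, Suc c)"
  unfolding SRCTs_def is_SRCT_def by blast

lemma SRCTsI:
  assumes "inj_on \<tau> (cells a)"
    and "\<And>x. x \<in> cells a \<Longrightarrow> 1 \<le> \<tau> x \<and> \<tau> x \<le> sum_list a"
    and "\<And>v. 1 \<le> v \<Longrightarrow> v \<le> sum_list a \<Longrightarrow> \<exists>x\<in>cells a. \<tau> x = v"
    and "\<And>r c c'. (r, c') \<in> cells a \<Longrightarrow> c < c' \<Longrightarrow> \<tau> (r, c') < \<tau> (r, c)"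
    and "\<And>r s. r < s \<Longrightarrow> s < length a \<Longrightarrow> \<tau> (r, 0) < \<tau> (s, 0)"
    and "\<And>r s c. r < s \<Longrightarrow> (s, Suc c) \<in> cells a \<Longrightarrow> (r, c) \<in> cells a
       \<Longrightarrow> \<tau> (s, Suc c) < \<tau> (r, c) \<Longrightarrow> (r, Suc c) \<in> cells a \<and> \<tau> (s, Suc c) < \<tau> (r, Suc c)"
    and "\<And>x. x \<notin> cells a \<Longrightarrow> \<tau> x = 0"
  shows "\<tau> \<in> SRCTs a"
proof -
  have "\<tau> ` cells a = {1..sum_list a}"
    using assms(2,3) by (auto simp: image_def) metis
  then have "bij_betw \<tau> (cells a) {1..sum_list a}"
    using assms(1) by (simp add: bij_betw_def)
  then show ?thesis
    using assms(4-7) unfolding SRCTs_def is_SRCT_def by blast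
qed

lemma finite_SRCTs: "finite (SRCTs a)"
proof (rule finite_subset)
  show "SRCTs a \<subseteq> {f. \<forall>x. (x \<in> cells a \<longrightarrow> f x \<in> {1..sum_list a}) \<and> (x \<notin> cells a \<longrightarrow> f x = 0)}"
    using SRCTs_range SRCTs_outside by fastforce
  show "finite {f. \<forall>x. (x \<in> cells a \<longrightarrow> f x \<in> {1..sum_list a}) \<and> (x \<notin> cells a \<longrightarrow> f x = (0::nat))}"
    by (rule finite_set_of_finite_funs) (simp_all add: finite_cells)
qed

lemma SRCTs_Nil: "SRCTs [] = {\<lambda>_. 0}"
proof
  have "cells [] = {}" by (simp add: cells_def)
  then show "SRCTs [] \<subseteq> {\<lambda>_. 0}" "{\<lambda>_. 0} \<subseteq> SRCTs []"
    using SRCTs_outside by (auto intro!: SRCTsI)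
qed

text \<open>The rows whose last cell can hold the entry \<open>1\<close>; removing that cell is the inverse of
  an \<open>L\<^sub>c\<close>-cover (a first row of length \<open>1\<close> disappears, shifting the other rows up).\<close>

definition removable_rows :: "nat list \<Rightarrow> nat set" where
  "removable_rows a = {r. r < length a \<and>
     ((r = 0 \<and> a ! 0 = 1) \<or> (2 \<le> a ! r \<and> a ! r - 1 \<notin> set (take r a)))}"

definition remove_cell :: "nat \<Rightarrow> nat list \<Rightarrow> nat list" where
  "remove_cell r a = (if a ! r = 1 then tl a else a[r := a ! r - 1])"

definition SRCTs_one_at :: "nat list \<Rightarrow> nat \<Rightarrow> (nat \<times> nat \<Rightarrow> nat) set" where
  "SRCTs_one_at a r = {\<tau> \<in> SRCTs a. \<tau> (r, a ! r - 1) = 1}"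

lemma removable_rowsE:
  assumes "r \<in> removable_rows a"
  obtains (first) "r = 0" "a = 1 # tl a" "remove_cell r a = tl a"
    | (shrink) "r < length a" "2 \<le> a ! r" "a ! r - 1 \<notin> set (take r a)"
        "remove_cell r a = a[r := a ! r - 1]"
  using assms by (cases a) (auto simp: removable_rows_def remove_cell_def)

lemma SRCTs_one_end_of_row:
  assumes t: "\<tau> \<in> SRCTs a" and a: "is_composition a" "a \<noteq> []"
  obtains r where "r < length a" "\<tau> (r, a ! r - 1) = 1"
proof -
  have "0 < a ! 0" using a by (cases a) (auto simp: is_composition_def)
  then have "1 \<le> sum_list a" using a elem_le_sum_list[of 0 a] by (cases a) auto
  then obtain r c where rc: "(r, c) \<in> cells a" "\<tau> (r, c) = 1"
    using SRCTs_surj[OF t, of 1] by auto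
  have "c = a ! r - 1"
  proof (rule ccontr)
    assume "c \<noteq> a ! r - 1"
    then have "(r, Suc c) \<in> cells a" using rc by (auto simp: cells_def)
    then show False
      using SRCTs_row[OF t, of r "Suc c" c] SRCTs_range[OF t, of "(r, Suc c)"] rc by simp
  qed
  then show thesis using that[of r] rc by (simp add: cells_def)
qed

lemma SRCTs_one_removable_row:
  assumes t: "\<tau> \<in> SRCTs a" and a: "is_composition a"
    and r: "r < length a" and one: "\<tau> (r, a ! r - 1) = 1"
  shows "r \<in> removable_rows a"
proof -
  have pos: "i < length a \<Longrightarrow> 0 < a ! i" for i
    using a by (auto simp: is_composition_def)
  show ?thesis
  proof (cases "a ! r = 1")
    case True
    have "r = 0"
    proof (rule ccontr)
      assume "r \<noteq> 0"
      then have "\<tau> (0, 0) < \<tau> (r, 0)" using SRCTs_first_column[OF t] r by simp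
      moreover have "(0, 0) \<in> cells a" using pos[of 0] r by (cases a) (simp_all add: cells_def)
      then have "1 \<le> \<tau> (0, 0)" using SRCTs_range[OF t] by blast
      ultimately show False using one True by simp
    qed
    then show ?thesis using True r by (simp add: removable_rows_def)
  next
    case False
    then have two: "2 \<le> a ! r" using pos[OF r] by simp
    have "a ! r - 1 \<notin> set (take r a)"
    proof
      assume "a ! r - 1 \<in> set (take r a)"
      then obtain r1 where r1: "r1 < r" "a ! r1 = a ! r - 1"
        using r by (auto simp: in_set_conv_nth)
      let ?c = "a ! r - 2"
      have s: "(r, Suc ?c) \<in> cells a" and r1c: "(r1, ?c) \<in> cells a"
        using r1 r two by (simp_all add: cells_def)
      have sc: "Suc ?c = a ! r - 1" using two by simp
      have "\<tau> (r1, ?c) \<noteq> 1"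
      proof
        assume "\<tau> (r1, ?c) = 1"
        then have "(r1, ?c) = (r, Suc ?c)" using SRCTs_inj[OF t r1c s] one sc by simp
        then show False using r1 by simp
      qed
      then have "\<tau> (r, Suc ?c) < \<tau> (r1, ?c)" using SRCTs_range[OF t r1c] one sc by simp
      then have "(r1, Suc ?c) \<in> cells a" using SRCTs_triple[OF t r1(1) s r1c] by blast
      then show False using r1 two by (simp add: cells_def; linarith)
    qed
    then show ?thesis using two r by (simp add: removable_rows_def)
  qed
qed

lemma SRCTs_eq_UN_SRCTs_one_at:
  assumes "is_composition a" "a \<noteq> []"
  shows "SRCTs a = (\<Union>r\<in>removable_rows a. SRCTs_one_at a r)"
proof (intro equalityI subsetI)
  fix \<tau> assume t: "\<tau> \<in> SRCTs a"
  then obtain r where "r < length a" "\<tau> (r, a ! r - 1) = 1"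
    using SRCTs_one_end_of_row assms by blast
  then show "\<tau> \<in> (\<Union>r\<in>removable_rows a. SRCTs_one_at a r)"
    using SRCTs_one_removable_row[OF t assms(1)] t by (auto simp: SRCTs_one_at_def)
qed (auto simp: SRCTs_one_at_def)

lemma SRCTs_one_at_disjoint:
  assumes "r \<in> removable_rows a" "r' \<in> removable_rows a" "r \<noteq> r'"
  shows "SRCTs_one_at a r \<inter> SRCTs_one_at a r' = {}"
proof -
  have "(r, a ! r - 1) \<in> cells a" "(r', a ! r' - 1) \<in> cells a"
    using assms by (auto simp: removable_rows_def cells_def)
  then show ?thesis
    using SRCTs_inj assms(3) by (fastforce simp: SRCTs_one_at_def)
qed

lemma remove_cell_compositions_of:
  assumes a: "is_composition a" and r: "r \<in> removable_rows a"
  shows "remove_cell r a \<in> compositions_of (sum_list a - 1)"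
  using r
proof (cases rule: removable_rowsE)
  case first
  then have "sum_list a = Suc (sum_list (tl a))"
    by (metis sum_list_simps(2) plus_1_eq_Suc)
  then show ?thesis using a first by (cases a) (auto simp: compositions_of_def is_composition_def)
next
  case shrink
  then show ?thesis using a sum_list_update[of r a "a ! r - 1"] elem_le_sum_list[of r a]
    by (auto simp: compositions_of_def is_composition_def dest: set_update_subset_insert[THEN subsetD])
qed

lemma inj_on_remove_cell: "inj_on (\<lambda>r. remove_cell r a) (removable_rows a)"
proof (rule inj_onI, rule ccontr)
  fix r r' assume r: "r \<in> removable_rows a" and r': "r' \<in> removable_rows a"
    and eq: "remove_cell r a = remove_cell r' a" and ne: "r \<noteq> r'"
  have "a \<noteq> []" using r by (auto simp: removable_rows_def)
  then have lengths: "tl a \<noteq> a[k := v]" for k v by (metis length_list_update length_tl diff_less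
      length_greater_0_conv less_irrefl zero_less_one)
  from r show False
  proof (cases rule: removable_rowsE)
    case first
    from r' show ?thesis
      by (cases rule: removable_rowsE) (use first ne eq lengths in simp_all)
  next
    case shrink
    from r' show ?thesis
    proof (cases rule: removable_rowsE)
      case first
      then show ?thesis using shrink eq lengths by simp
    next
      case shrink': shrink
      have "remove_cell r a ! r = remove_cell r' a ! r" using eq by simp
      then show ?thesis using shrink shrink' ne by simp
    qed
  qed
qed

lemma count_up_L:
  assumes b: "is_composition b"
  shows "count (up_L b) a = (if b \<in> (\<lambda>r. remove_cell r a) ` removable_rows a then 1 else 0)"
proof -
  let ?incs = "map (\<lambda>r. b[r := Suc (b ! r)]) (filter (\<lambda>r. b ! r \<notin> set (take r b)) [0..<length b])"
  have "inj_on (\<lambda>r. b[r := Suc (b ! r)]) {r. r < length b}"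
    by (rule inj_onI) (metis mem_Collect_eq n_not_Suc_n nth_list_update)
  then have "distinct ((1 # b) # ?incs)"
    by (auto simp: distinct_map intro: inj_on_subset dest: arg_cong[where f = length])
  then have le: "count (up_L b) a \<le> 1"
    unfolding up_L_def by (metis distinct_count_atmost_1 le_refl mset.simps(2) zero_le_one)
  have "a \<in># up_L b \<longleftrightarrow> (\<exists>r\<in>removable_rows a. remove_cell r a = b)"
  proof
    assume "a \<in># up_L b"
    then consider "a = 1 # b" | r where "r < length b" "b ! r \<notin> set (take r b)" "a = b[r := Suc (b ! r)]"
      by (auto simp: up_L_def)
    then show "\<exists>r\<in>removable_rows a. remove_cell r a = b"
    proof cases
      case 1
      then show ?thesis by (intro bexI[of _ 0]) (auto simp: removable_rows_def remove_cell_def)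
    next
      case (2 r)
      moreover have "0 < b ! r" using b 2(1) by (auto simp: is_composition_def)
      ultimately show ?thesis
        by (intro bexI[of _ r]) (auto simp: removable_rows_def remove_cell_def take_update_cancel)
    qed
  next
    assume "\<exists>r\<in>removable_rows a. remove_cell r a = b"
    then obtain r where r: "r \<in> removable_rows a" "remove_cell r a = b" by blast
    then show "a \<in># up_L b"
    proof (cases rule: removable_rowsE)
      case first
      then show ?thesis using r(2) by (metis up_L_def union_single_eq_member)
    next
      case shrink
      then have "r < length b" "b ! r \<notin> set (take r b)" "a = b[r := Suc (b ! r)]"
        using r(2) by (simp_all add: take_update_cancel)
      then show ?thesis by (force simp: up_L_def)
    qed
  qed
  then show ?thesis
    using le by (auto simp: count_greater_zero_iff[symmetric] simp del: count_greater_zero_iff)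
qed

locale shrink_row =
  fixes a :: "nat list" and r :: nat and b :: "nat list" and p :: "nat \<times> nat"
  assumes comp: "is_composition a"
    and r: "r < length a" "2 \<le> a ! r" "a ! r - 1 \<notin> set (take r a)"
  defines "b \<equiv> a[r := a ! r - 1]" and "p \<equiv> (r, a ! r - 1)"
begin

definition lower :: "(nat \<times> nat \<Rightarrow> nat) \<Rightarrow> nat \<times> nat \<Rightarrow> nat" where
  "lower \<tau> x = (if x \<in> cells b then \<tau> x - 1 else 0)"

definition raise :: "(nat \<times> nat \<Rightarrow> nat) \<Rightarrow> nat \<times> nat \<Rightarrow> nat" where
  "raise \<sigma> x = (if x \<in> cells b then \<sigma> x + 1 else if x = p then 1 else 0)"

lemma length_b: "length b = length a"
  by (simp add: b_def)

lemma nth_b: "b ! x = (if x = r then a ! r - 1 else a ! x)"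
  using r by (simp add: b_def nth_list_update)

lemma cells_b: "cells b = cells a - {p}"
  using r by (auto simp: cells_def p_def length_b nth_b split: if_splits)

lemma p_in_cells: "p \<in> cells a"
  using r by (simp add: cells_def p_def)

lemma sum_list_b: "sum_list b = sum_list a - 1"
  using r by (simp add: b_def sum_list_update)

lemma sum_list_a_pos: "1 \<le> sum_list a"
  using elem_le_sum_list[OF r(1)] r by simp

lemma first_column_in_b: "x < length a \<Longrightarrow> (x, 0) \<in> cells b"
  using comp r by (auto simp: cells_def length_b nth_b is_composition_def)

lemma lower_in_SRCTs:
  assumes t: "\<tau> \<in> SRCTs_one_at a r"
  shows "lower \<tau> \<in> SRCTs b"
proof -
  have t1: "\<tau> \<in> SRCTs a" and one_at_p: "\<tau> p = 1" using t by (auto simp: SRCTs_one_at_def p_def)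
  have ge2: "2 \<le> \<tau> x" if "x \<in> cells b" for x
  proof -
    have "x \<in> cells a" "x \<noteq> p" using that cells_b by auto
    then have "\<tau> x \<noteq> 1" using SRCTs_inj[OF t1 \<open>x \<in> cells a\<close> p_in_cells] one_at_p by auto
    then show ?thesis using SRCTs_range[OF t1 \<open>x \<in> cells a\<close>] by simp
  qed
  have cells_b_sub: "x \<in> cells b \<Longrightarrow> x \<in> cells a" for x using cells_b by auto
  show ?thesis
  proof (rule SRCTsI)
    show "inj_on (lower \<tau>) (cells b)"
    proof (rule inj_onI)
      fix x y assume xy: "x \<in> cells b" "y \<in> cells b" "lower \<tau> x = lower \<tau> y"
      then have "\<tau> x = \<tau> y" using ge2[of x] ge2[of y] by (simp add: lower_def)
      then show "x = y" using SRCTs_inj[OF t1] xy cells_b_sub by blast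
    qed
    show "1 \<le> lower \<tau> x \<and> lower \<tau> x \<le> sum_list b" if "x \<in> cells b" for x
      using ge2[OF that] SRCTs_range[OF t1 cells_b_sub[OF that]] that
      by (simp add: lower_def sum_list_b; linarith)
    show "\<exists>x\<in>cells b. lower \<tau> x = v" if v: "1 \<le> v" "v \<le> sum_list b" for v
    proof -
      have "Suc v \<le> sum_list a" using v sum_list_b sum_list_a_pos by linarith
      then obtain x where x: "x \<in> cells a" "\<tau> x = Suc v" using SRCTs_surj[OF t1, of "Suc v"] by auto
      have "x \<noteq> p" using x one_at_p v by auto
      then have "x \<in> cells b" using x cells_b by auto
      then show ?thesis using x by (intro bexI[of _ x]) (auto simp: lower_def)
    qed
    show "lower \<tau> (r', c') < lower \<tau> (r', c)" if "(r', c') \<in> cells b" "c < c'" for r' c c'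
    proof -
      have "(r', c) \<in> cells b" using that by (auto simp: cells_def)
      then show ?thesis using SRCTs_row[OF t1 cells_b_sub[OF that(1)] that(2)] ge2[OF that(1)] that
        by (simp add: lower_def)
    qed
    show "lower \<tau> (r', 0) < lower \<tau> (s, 0)" if "r' < s" "s < length b" for r' s
      using SRCTs_first_column[OF t1 that(1)] that first_column_in_b[of r'] first_column_in_b[of s]
        ge2[of "(r', 0)"] ge2[of "(s,0)"] length_b
      by (simp add: lower_def)
    show "(r', Suc c) \<in> cells b \<and> lower \<tau> (s, Suc c) < lower \<tau> (r', Suc c)"
      if h: "r' < s" "(s, Suc c) \<in> cells b" "(r', c) \<in> cells b"
        "lower \<tau> (s, Suc c) < lower \<tau> (r', c)" for r' s c
    proof -
      have "\<tau> (s, Suc c) < \<tau> (r', c)" using h ge2[OF h(2)] ge2[OF h(3)] by (simp add: lower_def)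
      then have T: "(r', Suc c) \<in> cells a \<and> \<tau> (s, Suc c) < \<tau> (r', Suc c)"
        using SRCTs_triple[OF t1 h(1) cells_b_sub[OF h(2)] cells_b_sub[OF h(3)]] by blast
      have "(r', Suc c) \<noteq> p" using T one_at_p ge2[OF h(2)] by auto
      then have "(r', Suc c) \<in> cells b" using T cells_b by auto
      then show ?thesis using T ge2[OF h(2)] h by (simp add: lower_def; linarith)
    qed
    show "lower \<tau> x = 0" if "x \<notin> cells b" for x using that by (simp add: lower_def)
  qed
qed

lemma raise_b: "x \<in> cells b \<Longrightarrow> raise \<sigma> x = \<sigma> x + 1"
  by (simp add: raise_def)

lemma raise_p: "raise \<sigma> p = 1"
  using cells_b by (simp add: raise_def)

lemma cells_a_sub: "x \<in> cells a \<Longrightarrow> x \<noteq> p \<Longrightarrow> x \<in> cells b"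
  using cells_b by auto

lemma inj_on_raise:
  assumes s: "\<sigma> \<in> SRCTs b"
  shows "inj_on (raise \<sigma>) (cells a)"
proof (rule inj_onI)
  fix x y assume xy: "x \<in> cells a" "y \<in> cells a" "raise \<sigma> x = raise \<sigma> y"
  have ne_p: "raise \<sigma> z \<noteq> raise \<sigma> p" if "z \<in> cells a" "z \<noteq> p" for z
    using that cells_a_sub raise_b raise_p SRCTs_range[OF s] by fastforce
  show "x = y"
  proof (cases "x = p \<or> y = p")
    case True
    then show ?thesis using xy ne_p by metis
  next
    case False
    then have "x \<in> cells b" "y \<in> cells b" using xy cells_a_sub by auto
    then show ?thesis using xy(3) raise_b SRCTs_inj[OF s] by simp
  qed
qed

text \<open>At the new cell \<open>p\<close> the triple rule holds because \<open>r\<close> is the leftmost row of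
  length \<open>a ! r - 1\<close> in \<open>b\<close>.\<close>

lemma raise_triple:
  assumes s: "\<sigma> \<in> SRCTs b"
    and h: "r' < s'" "(s', Suc c) \<in> cells a" "(r', c) \<in> cells a" "raise \<sigma> (s', Suc c) < raise \<sigma> (r', c)"
  shows "(r', Suc c) \<in> cells a \<and> raise \<sigma> (s', Suc c) < raise \<sigma> (r', Suc c)"
proof (cases "(s', Suc c) = p")
  case True
  then have sc: "s' = r" "Suc c = a ! r - 1" by (auto simp: p_def)
  have "a ! r' \<noteq> a ! r - 1"
  proof
    assume "a ! r' = a ! r - 1"
    moreover have "r' < length a" using h(1) sc r by simp
    ultimately have "a ! r - 1 \<in> set (take r a)" using h(1) sc
      by (auto simp: in_set_conv_nth intro!: exI[of _ r'])
    then show False using r by simp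
  qed
  moreover have "c < a ! r'" using h(3) by (simp add: cells_def)
  ultimately have "Suc c < a ! r'" using sc by linarith
  then have A: "(r', Suc c) \<in> cells a" using h(3) by (simp add: cells_def)
  have "(r', Suc c) \<noteq> p" using h(1) sc by (simp add: p_def)
  then have "(r', Suc c) \<in> cells b" using cells_a_sub A by blast
  then show ?thesis
    using A True raise_p raise_b[of "(r', Suc c)"] SRCTs_range[OF s, of "(r', Suc c)"] by simp
next
  case False
  then have sb: "(s', Suc c) \<in> cells b" using cells_a_sub h by blast
  show ?thesis
  proof (cases "(r', c) = p")
    case True
    then show ?thesis using h(4) raise_p raise_b[OF sb] by simp
  next
    case False
    then have rb: "(r', c) \<in> cells b" using cells_a_sub h by blast
    have "\<sigma> (s', Suc c) < \<sigma> (r', c)" using h(4) raise_b sb rb by simp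
    then have "(r', Suc c) \<in> cells b \<and> \<sigma> (s', Suc c) < \<sigma> (r', Suc c)"
      using SRCTs_triple[OF s h(1) sb rb] by blast
    then show ?thesis using raise_b sb cells_b by auto
  qed
qed

lemma raise_in_SRCTs_one_at:
  assumes s: "\<sigma> \<in> SRCTs b"
  shows "raise \<sigma> \<in> SRCTs_one_at a r"
proof -
  have "raise \<sigma> \<in> SRCTs a"
  proof (rule SRCTsI)
    show "inj_on (raise \<sigma>) (cells a)" using inj_on_raise[OF s] .
    show "1 \<le> raise \<sigma> x \<and> raise \<sigma> x \<le> sum_list a" if "x \<in> cells a" for x
      using that cells_a_sub[of x] SRCTs_range[OF s, of x] raise_b[of x] raise_p sum_list_b sum_list_a_pos
      by (cases "x = p") auto
    show "\<exists>x\<in>cells a. raise \<sigma> x = v" if v: "1 \<le> v" "v \<le> sum_list a" for v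
    proof (cases "v = 1")
      case True
      then show ?thesis using p_in_cells raise_p by blast
    next
      case False
      then have "1 \<le> v - 1" "v - 1 \<le> sum_list b" using v sum_list_b by auto
      then obtain x where "x \<in> cells b" "\<sigma> x = v - 1" using SRCTs_surj[OF s, of "v - 1"] by auto
      then show ?thesis using raise_b cells_b False v by (intro bexI[of _ x]) auto
    qed
    show "raise \<sigma> (r', c') < raise \<sigma> (r', c)" if h: "(r', c') \<in> cells a" "c < c'" for r' c c'
    proof (cases "(r', c') = p")
      case True
      then have "(r', c) \<in> cells b" using h r by (auto simp: p_def cells_def length_b nth_b)
      then show ?thesis using True raise_p raise_b[of "(r', c)"] SRCTs_range[OF s, of "(r', c)"] by simp
    next
      case False
      then have "(r', c') \<in> cells b" using cells_a_sub h by blast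
      then have "(r', c') \<in> cells b" "(r', c) \<in> cells b" using h by (auto simp: cells_def)
      then show ?thesis using SRCTs_row[OF s] h raise_b by simp
    qed
    show "raise \<sigma> (r', 0) < raise \<sigma> (s', 0)" if "r' < s'" "s' < length a" for r' s'
      using SRCTs_first_column[OF s that(1)] that first_column_in_b[of r'] first_column_in_b[of s']
        raise_b length_b
      by simp
    show "(r', Suc c) \<in> cells a \<and> raise \<sigma> (s', Suc c) < raise \<sigma> (r', Suc c)"
      if "r' < s'" "(s', Suc c) \<in> cells a" "(r', c) \<in> cells a"
        "raise \<sigma> (s', Suc c) < raise \<sigma> (r', c)" for r' s' c
      using raise_triple[OF s that] .
    show "raise \<sigma> x = 0" if "x \<notin> cells a" for x
      using that cells_b p_in_cells by (auto simp: raise_def)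
  qed
  then show ?thesis using raise_p by (simp add: SRCTs_one_at_def p_def)
qed

lemma card_SRCTs_one_at: "card (SRCTs_one_at a r) = card (SRCTs b)"
proof (rule bij_betw_same_card, rule bij_betw_byWitness[where f' = raise])
  show "\<forall>\<tau>\<in>SRCTs_one_at a r. raise (lower \<tau>) = \<tau>"
  proof (intro ballI ext)
    fix \<tau> x assume "\<tau> \<in> SRCTs_one_at a r"
    then have t: "\<tau> \<in> SRCTs a" and one_at_p: "\<tau> p = 1" by (auto simp: SRCTs_one_at_def p_def)
    show "raise (lower \<tau>) x = \<tau> x"
    proof (cases "x \<in> cells b")
      case True
      then have "1 \<le> \<tau> x" using SRCTs_range[OF t] cells_b by blast
      then show ?thesis using True by (simp add: lower_def raise_def)
    next
      case False
      then show ?thesis using one_at_p SRCTs_outside[OF t, of x] cells_b by (auto simp: lower_def raise_def)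
    qed
  qed
  show "\<forall>\<sigma>\<in>SRCTs b. lower (raise \<sigma>) = \<sigma>"
    using SRCTs_outside by (auto simp: lower_def raise_def)
  show "lower ` SRCTs_one_at a r \<subseteq> SRCTs b" using lower_in_SRCTs by blast
  show "raise ` SRCTs b \<subseteq> SRCTs_one_at a r" using raise_in_SRCTs_one_at by blast
qed

end

locale first_row =
  fixes b :: "nat list" and a :: "nat list" and p :: "nat \<times> nat"
  defines "a \<equiv> 1 # b" and "p \<equiv> (0, 0)"
  assumes comp: "is_composition a"
begin

definition lower :: "(nat \<times> nat \<Rightarrow> nat) \<Rightarrow> nat \<times> nat \<Rightarrow> nat" where
  "lower \<tau> q = (if q \<in> cells b then \<tau> (Suc (fst q), snd q) - 1 else 0)"

definition raise :: "(nat \<times> nat \<Rightarrow> nat) \<Rightarrow> nat \<times> nat \<Rightarrow> nat" where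
  "raise \<sigma> q = (if q = p then 1 else if fst q \<noteq> 0 \<and> (fst q - 1, snd q) \<in> cells b
      then \<sigma> (fst q - 1, snd q) + 1 else 0)"

lemma cells_a_iff: "(x, y) \<in> cells a \<longleftrightarrow> (x = 0 \<and> y = 0) \<or> (x \<noteq> 0 \<and> (x - 1, y) \<in> cells b)"
  by (cases x) (auto simp: cells_def a_def)

lemma p_in_cells: "p \<in> cells a"
  by (simp add: cells_def p_def a_def)

lemma a_simps [simp]: "sum_list a = Suc (sum_list b)" "length a = Suc (length b)" "a ! 0 = 1"
  "a \<noteq> []"
  by (simp_all add: a_def)

lemma Suc_row_in_cells_a: "(Suc x, y) \<in> cells a \<longleftrightarrow> (x, y) \<in> cells b"
  by (simp add: cells_def a_def)

lemma first_column_in_b: "x < length b \<Longrightarrow> (x, 0) \<in> cells b"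
  using comp by (auto simp: cells_def a_def is_composition_def)

lemma lower_in_SRCTs:
  assumes t: "\<tau> \<in> SRCTs_one_at a 0"
  shows "lower \<tau> \<in> SRCTs b"
proof -
  have t1: "\<tau> \<in> SRCTs a" and one_at_p: "\<tau> p = 1" using t by (auto simp: SRCTs_one_at_def p_def a_def)
  have ge2: "2 \<le> \<tau> (Suc x, y)" if "(x, y) \<in> cells b" for x y
  proof -
    have c: "(Suc x, y) \<in> cells a" using that Suc_row_in_cells_a by blast
    have "(Suc x, y) \<noteq> p" by (simp add: p_def)
    then have "\<tau> (Suc x, y) \<noteq> 1" using SRCTs_inj[OF t1 c p_in_cells] one_at_p by auto
    then show ?thesis using SRCTs_range[OF t1 c] by simp
  qed
  have lower_eq: "(x, y) \<in> cells b \<Longrightarrow> lower \<tau> (x, y) = \<tau> (Suc x, y) - 1" for x y by (simp add: lower_def)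
  show ?thesis
  proof (rule SRCTsI)
    show "inj_on (lower \<tau>) (cells b)"
    proof (rule inj_onI)
      fix q q' assume xy: "q \<in> cells b" "q' \<in> cells b" "lower \<tau> q = lower \<tau> q'"
      obtain x y x' y' where qq: "q = (x, y)" "q' = (x', y')" by (cases q; cases q')
      have "\<tau> (Suc x, y) = \<tau> (Suc x', y')" using xy qq lower_eq ge2[of x y] ge2[of x' y'] by simp
      then have "(Suc x, y) = (Suc x', y')" using SRCTs_inj[OF t1] xy qq Suc_row_in_cells_a by blast
      then show "q = q'" using qq by simp
    qed
    show "1 \<le> lower \<tau> q \<and> lower \<tau> q \<le> sum_list b" if "q \<in> cells b" for q
    proof -
      obtain x y where q: "q = (x, y)" by (cases q)
      have "\<tau> (Suc x, y) \<le> sum_list a" using SRCTs_range[OF t1] Suc_row_in_cells_a that q by blast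
      then show ?thesis using ge2[of x y] that q lower_eq by (simp; linarith)
    qed
    show "\<exists>q\<in>cells b. lower \<tau> q = v" if v: "1 \<le> v" "v \<le> sum_list b" for v
    proof -
      have "Suc v \<le> sum_list a" using v by simp
      then obtain q where q: "q \<in> cells a" "\<tau> q = Suc v" using SRCTs_surj[OF t1, of "Suc v"] by auto
      obtain x y where xy: "q = (x, y)" by (cases q)
      have "q \<noteq> p" using q one_at_p v by auto
      then have "x \<noteq> 0" "(x - 1, y) \<in> cells b" using q xy cells_a_iff p_def by auto
      then show ?thesis using q xy lower_eq by (intro bexI[of _ "(x - 1, y)"]) auto
    qed
    show "lower \<tau> (r', c') < lower \<tau> (r', c)" if h: "(r', c') \<in> cells b" "c < c'" for r' c c'
    proof -
      have "(r', c) \<in> cells b" using h by (auto simp: cells_def)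
      moreover have "\<tau> (Suc r', c') < \<tau> (Suc r', c)" using SRCTs_row[OF t1 _ h(2)] Suc_row_in_cells_a h(1) by blast
      ultimately show ?thesis using ge2[OF h(1)] h lower_eq by simp
    qed
    show "lower \<tau> (r', 0) < lower \<tau> (s, 0)" if h: "r' < s" "s < length b" for r' s
    proof -
      have "\<tau> (Suc r', 0) < \<tau> (Suc s, 0)" using SRCTs_first_column[OF t1, of "Suc r'" "Suc s"] h by simp
      then show ?thesis using first_column_in_b[of r'] first_column_in_b[of s] h ge2[of r' 0] lower_eq by simp
    qed
    show "(r', Suc c) \<in> cells b \<and> lower \<tau> (s, Suc c) < lower \<tau> (r', Suc c)"
      if h: "r' < s" "(s, Suc c) \<in> cells b" "(r', c) \<in> cells b"
        "lower \<tau> (s, Suc c) < lower \<tau> (r', c)" for r' s c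
    proof -
      have "\<tau> (Suc s, Suc c) < \<tau> (Suc r', c)" using h ge2[OF h(2)] ge2[OF h(3)] lower_eq by simp
      then have T: "(Suc r', Suc c) \<in> cells a \<and> \<tau> (Suc s, Suc c) < \<tau> (Suc r', Suc c)"
        using SRCTs_triple[OF t1, of "Suc r'" "Suc s" c] h Suc_row_in_cells_a by blast
      then have "(r', Suc c) \<in> cells b" using Suc_row_in_cells_a by blast
      then show ?thesis using T ge2[OF h(2)] lower_eq h(2) by (simp; linarith)
    qed
    show "lower \<tau> q = 0" if "q \<notin> cells b" for q using that by (simp add: lower_def)
  qed
qed

lemma raise_Suc: "(x, y) \<in> cells b \<Longrightarrow> raise \<sigma> (Suc x, y) = \<sigma> (x, y) + 1"
  by (simp add: raise_def p_def)

lemma raise_p: "raise \<sigma> p = 1"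
  by (simp add: raise_def)

lemma inj_on_raise:
  assumes s: "\<sigma> \<in> SRCTs b"
  shows "inj_on (raise \<sigma>) (cells a)"
proof (rule inj_onI)
  fix q q' assume xy: "q \<in> cells a" "q' \<in> cells a" "raise \<sigma> q = raise \<sigma> q'"
  obtain x y x' y' where qq: "q = (x, y)" "q' = (x', y')" by (cases q; cases q')
  show "q = q'"
  proof (cases "x = 0"; cases "x' = 0")
    assume "x = 0" "x' = 0" then show "q = q'" using xy qq cells_a_iff by auto
  next
    assume h: "x = 0" "x' \<noteq> 0"
    then have "q = p" "(x' - 1, y') \<in> cells b" using xy qq cells_a_iff p_def by auto
    moreover have "raise \<sigma> q' = \<sigma> (x' - 1, y') + 1" using h calculation qq by (simp add: raise_def p_def)
    ultimately show "q = q'" using xy raise_p SRCTs_range[OF s, of "(x' - 1, y')"] by auto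
  next
    assume h: "x \<noteq> 0" "x' = 0"
    then have "q' = p" "(x - 1, y) \<in> cells b" using xy qq cells_a_iff p_def by auto
    moreover have "raise \<sigma> q = \<sigma> (x - 1, y) + 1" using h calculation qq by (simp add: raise_def p_def)
    ultimately show "q = q'" using xy raise_p SRCTs_range[OF s, of "(x - 1, y)"] by auto
  next
    assume h: "x \<noteq> 0" "x' \<noteq> 0"
    then have c: "(x - 1, y) \<in> cells b" "(x' - 1, y') \<in> cells b" using xy qq cells_a_iff by auto
    then have "\<sigma> (x - 1, y) = \<sigma> (x' - 1, y')" using xy qq h by (simp add: raise_def p_def)
    then have "(x - 1, y) = (x' - 1, y')" using SRCTs_inj[OF s c] by blast
    then show "q = q'" using qq h by auto
  qed
qed

lemma raise_triple:
  assumes s: "\<sigma> \<in> SRCTs b"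
    and h: "r' < s'" "(s', Suc c) \<in> cells a" "(r', c) \<in> cells a"
      "raise \<sigma> (s', Suc c) < raise \<sigma> (r', c)"
  shows "(r', Suc c) \<in> cells a \<and> raise \<sigma> (s', Suc c) < raise \<sigma> (r', Suc c)"
proof -
  obtain y where y: "s' = Suc y" using h by (cases s') auto
  have yb: "(y, Suc c) \<in> cells b" using h(2) y Suc_row_in_cells_a by blast
  show ?thesis
  proof (cases r')
    case 0
    then have "c = 0" using h(3) by (simp add: cells_def)
    then show ?thesis using h(4) 0 raise_p raise_Suc[OF yb] y p_def SRCTs_range[OF s yb] by simp
  next
    case (Suc x)
    then have xb: "(x, c) \<in> cells b" using h(3) Suc_row_in_cells_a by blast
    have "\<sigma> (y, Suc c) < \<sigma> (x, c)" using h(4) raise_Suc[OF yb] raise_Suc[OF xb] y Suc by simp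
    then have "(x, Suc c) \<in> cells b \<and> \<sigma> (y, Suc c) < \<sigma> (x, Suc c)"
      using SRCTs_triple[OF s _ yb xb] h(1) Suc y by simp
    then show ?thesis using raise_Suc yb Suc y Suc_row_in_cells_a by simp
  qed
qed

lemma raise_in_SRCTs_one_at:
  assumes s: "\<sigma> \<in> SRCTs b"
  shows "raise \<sigma> \<in> SRCTs_one_at a 0"
proof -
  have range_b: "q \<in> cells b \<Longrightarrow> 1 \<le> \<sigma> q \<and> \<sigma> q \<le> sum_list b" for q
    using SRCTs_range[OF s] by blast
  have "raise \<sigma> \<in> SRCTs a"
  proof (rule SRCTsI)
    show "inj_on (raise \<sigma>) (cells a)"
      using inj_on_raise[OF s] .
    show "1 \<le> raise \<sigma> q \<and> raise \<sigma> q \<le> sum_list a" if "q \<in> cells a" for q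
    proof -
      obtain x y where q: "q = (x, y)" by (cases q)
      show ?thesis
      proof (cases "x = 0")
        case True then show ?thesis using that q cells_a_iff raise_p p_def by auto
      next
        case False
        then have "(x - 1, y) \<in> cells b" using that q cells_a_iff by auto
        then show ?thesis using range_b False q by (simp add: raise_def p_def)
      qed
    qed
    show "\<exists>q\<in>cells a. raise \<sigma> q = v" if v: "1 \<le> v" "v \<le> sum_list a" for v
    proof (cases "v = 1")
      case True then show ?thesis using p_in_cells raise_p by blast
    next
      case False
      then have "1 \<le> v - 1" "v - 1 \<le> sum_list b" using v by auto
      then obtain q where q: "q \<in> cells b" "\<sigma> q = v - 1" using SRCTs_surj[OF s] by blast
      obtain x y where xy: "q = (x, y)" by (cases q)
      show ?thesis using q xy raise_Suc Suc_row_in_cells_a False v by (intro bexI[of _ "(Suc x, y)"]) auto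
    qed
    show "raise \<sigma> (r', c') < raise \<sigma> (r', c)" if h: "(r', c') \<in> cells a" "c < c'" for r' c c'
    proof (cases r')
      case 0 then show ?thesis using h by (simp add: cells_def)
    next
      case (Suc x)
      then have c1: "(x, c') \<in> cells b" using h Suc_row_in_cells_a by blast
      then have "(x, c) \<in> cells b" using h by (auto simp: cells_def)
      then show ?thesis using SRCTs_row[OF s c1 h(2)] raise_Suc c1 Suc by simp
    qed
    show "raise \<sigma> (r', 0) < raise \<sigma> (s', 0)" if h: "r' < s'" "s' < length a" for r' s'
    proof -
      obtain y where y: "s' = Suc y" using h by (cases s') auto
      have yb: "(y, 0) \<in> cells b" using first_column_in_b h y by simp
      show ?thesis
      proof (cases r')
        case 0
        then show ?thesis using raise_p raise_Suc[OF yb] y p_def range_b[OF yb] by simp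
      next
        case (Suc x)
        then have "(x, 0) \<in> cells b" using first_column_in_b h y by simp
        then show ?thesis using SRCTs_first_column[OF s, of x y] raise_Suc yb Suc y h by simp
      qed
    qed
    show "(r', Suc c) \<in> cells a \<and> raise \<sigma> (s', Suc c) < raise \<sigma> (r', Suc c)"
      if "r' < s'" "(s', Suc c) \<in> cells a" "(r', c) \<in> cells a"
        "raise \<sigma> (s', Suc c) < raise \<sigma> (r', c)" for r' s' c
      using raise_triple[OF s that] .
    show "raise \<sigma> q = 0" if "q \<notin> cells a" for q
    proof -
      obtain x y where q: "q = (x, y)" by (cases q)
      show ?thesis using that q cells_a_iff[of x y] by (auto simp: raise_def p_def)
    qed
  qed
  then show ?thesis using raise_p by (simp add: SRCTs_one_at_def p_def)
qed

lemma card_SRCTs_one_at: "card (SRCTs_one_at a 0) = card (SRCTs b)"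
proof (rule bij_betw_same_card, rule bij_betw_byWitness[where f' = raise])
  show "\<forall>\<tau>\<in>SRCTs_one_at a 0. raise (lower \<tau>) = \<tau>"
  proof (intro ballI ext)
    fix \<tau> and q :: "nat \<times> nat" assume "\<tau> \<in> SRCTs_one_at a 0"
    then have t: "\<tau> \<in> SRCTs a" and one_at_p: "\<tau> p = 1" by (auto simp: SRCTs_one_at_def p_def a_def)
    obtain x y where q: "q = (x, y)" by (cases q)
    show "raise (lower \<tau>) q = \<tau> q"
    proof (cases "q = p \<or> (x \<noteq> 0 \<and> (x - 1, y) \<in> cells b)")
      case True
      then show ?thesis
        using one_at_p q SRCTs_range[OF t, of q] cells_a_iff by (auto simp: lower_def raise_def)
    next
      case False
      then have "q \<notin> cells a" using q cells_a_iff p_def by auto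
      then show ?thesis using SRCTs_outside[OF t] False q by (auto simp: lower_def raise_def)
    qed
  qed
  show "\<forall>\<sigma>\<in>SRCTs b. lower (raise \<sigma>) = \<sigma>"
    using SRCTs_outside by (fastforce simp: lower_def raise_def p_def)
  show "lower ` SRCTs_one_at a 0 \<subseteq> SRCTs b" using lower_in_SRCTs by blast
  show "raise ` SRCTs b \<subseteq> SRCTs_one_at a 0" using raise_in_SRCTs_one_at by blast
qed

end

lemma card_SRCTs_one_at:
  assumes a: "is_composition a" and r: "r \<in> removable_rows a"
  shows "card (SRCTs_one_at a r) = card (SRCTs (remove_cell r a))"
  using r
proof (cases rule: removable_rowsE)
  case first
  interpret first_row "tl a" "1 # tl a" "(0, 0)"
    using a first by unfold_locales simp_all
  show ?thesis using card_SRCTs_one_at first by simp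
next
  case shrink
  interpret shrink_row a r "a[r := a ! r - 1]" "(r, a ! r - 1)"
    using a shrink by unfold_locales simp_all
  show ?thesis using card_SRCTs_one_at shrink by simp
qed

lemma card_SRCTs_rec:
  assumes a: "a \<in> compositions_of (Suc n)"
  shows "card (SRCTs a) = (\<Sum>b\<in>compositions_of n. card (SRCTs b) * count (up_L b) a)"
proof -
  have ac: "is_composition a" "a \<noteq> []" "sum_list a = Suc n"
    using a by (auto simp: compositions_of_def)
  let ?R = "removable_rows a" and ?rm = "\<lambda>r. remove_cell r a"
  have "finite ?R" by (rule finite_subset[of _ "{..<length a}"]) (auto simp: removable_rows_def)
  have "card (SRCTs a) = card (\<Union>r\<in>?R. SRCTs_one_at a r)"
    using SRCTs_eq_UN_SRCTs_one_at[OF ac(1,2)] by simp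
  also have "\<dots> = (\<Sum>r\<in>?R. card (SRCTs_one_at a r))"
    using \<open>finite ?R\<close> finite_SRCTs SRCTs_one_at_disjoint
    by (intro card_UN_disjoint) (auto simp: SRCTs_one_at_def)
  also have "\<dots> = (\<Sum>r\<in>?R. card (SRCTs (?rm r)))"
    using card_SRCTs_one_at[OF ac(1)] by simp
  also have "\<dots> = (\<Sum>b\<in>?rm ` ?R. card (SRCTs b))"
    by (simp add: sum.reindex[OF inj_on_remove_cell])
  also have "\<dots> = (\<Sum>b\<in>{b \<in> compositions_of n. b \<in> ?rm ` ?R}. card (SRCTs b))"
    using remove_cell_compositions_of[OF ac(1)] ac(3) by (intro sum.cong) auto
  also have "\<dots> = (\<Sum>b\<in>compositions_of n. if b \<in> ?rm ` ?R then card (SRCTs b) else 0)"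
    using finite_compositions_of by (rule sum.inter_filter)
  also have "\<dots> = (\<Sum>b\<in>compositions_of n. card (SRCTs b) * count (up_L b) a)"
    by (rule sum.cong) (auto simp: count_up_L compositions_of_def)
  finally show ?thesis .
qed

lemma card_chains_to_eq_card_SRCTs:
  "a \<in> compositions_of n \<Longrightarrow> card (chains_to a) = card (SRCTs a)"
proof (induction n arbitrary: a)
  case 0
  then show ?case by (simp add: compositions_of_0 chains_to_Nil SRCTs_Nil)
next
  case (Suc m)
  then show ?case
    by (simp add: card_chains_to_rec_up_L card_SRCTs_rec)
qed

theorem theorem8p5:
  assumes "is_composition \<alpha>"
  shows "card (chains_to \<alpha>) = card (SRCTs \<alpha>)"
  using card_chains_to_eq_card_SRCTs[of \<alpha> "sum_list \<alpha>"] assms by (simp add: compositions_of_def)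

end
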